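(* Let $n>l\ge0$ be integers and let $x,y$ be complex numbers. Then $$\frac{n-l+1}2\sum_{k=\delta_{l,0}}^{n}\binom nk\binom n{k+l-1}E_{k+l-1}(x)E_{n-k}(y)=\sum_{k=0}^n\binom nk\binom{k+n}{k+l}\left((-1)^{n-k}B_{k+l}(x)-B_{k+l}(y)\right)E_{n-k}(x-y)$$ and $$\frac{n-l}n\sum_{k=0}^{n-l}\binom nk\binom n{k+l}B_{k+l}(x)B_{n-k}(y)=\sum_{k=0}^n\binom nk\binom{k+n-1}{k+l}\left((-1)^{n-k}B_{k+l}(x)+B_{k+l}(y)\right)B_{n-k}(x-y).$$ In particular, $$\frac{(n+1)(n+1-l)}8\sum_{k=\delta_{l,0}}^n\binom nk\binom n{k+l-1}E_{k+l-1}(x)E_{n-k}(x)=\sum_{k=0}^{n-1}\binom{n+1}k\binom{k+n}{k+l}B_{k+l}(x)\left(2^{n-k+1}-1\right)B_{n-k+1}$$ and $$\sum_{k=0}^{n-l}\binom nk\binom n{k+l}B_{k+l}(x)B_{n-k}(x)=\frac{2n}{n-l}\sum_{0\le k\le n,\ k\ne n-1}\binom nk\binom {k+n-1}{k+l}B_{k+l}(x)B_{n-k}.$$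
   Context: $\delta_{l,0}$ equals $1$ if $l=0$ and $0$ otherwise. Bernoulli numbers are defined by $B_0=1$ and $\sum_{k=0}^n\binom{n+1}kB_k=0$ for $n\ge1$; Euler numbers by $E_0=1$ and $\sum_{0\le k\le n,\,2\mid n-k}\binom nkE_k=0$ for $n\ge1$. The Bernoulli polynomials are $B_n(x)=\sum_{k=0}^n\binom nkB_kx^{n-k}$ and the Euler polynomials are $E_n(x)=\sum_{k=0}^n\binom nk\frac{E_k}{2^k}(x-\frac12)^{n-k}$. *)

theory Defs
  imports Complex_Main
begin

function bernoulli_num :: "nat \<Rightarrow> rat" where
  "bernoulli_num n = (if n = 0 then 1
     else - (\<Sum>k<n. of_nat (Suc n choose k) * bernoulli_num k) / of_nat (Suc n))"
  by auto
termination by (relation "measure id") auto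

function euler_num :: "nat \<Rightarrow> int" where
  "euler_num n = (if n = 0 then 1
     else - (\<Sum>k\<in>{k. k < n \<and> even (n - k)}. of_nat (n choose k) * euler_num k))"
  by auto
termination by (relation "measure id") auto

definition bernoulli_poly :: "nat \<Rightarrow> complex \<Rightarrow> complex" where
  "bernoulli_poly n x = (\<Sum>k\<le>n. of_nat (n choose k) * of_rat (bernoulli_num k) * x ^ (n - k))"

definition euler_poly :: "nat \<Rightarrow> complex \<Rightarrow> complex" where
  "euler_poly n x = (\<Sum>k\<le>n. of_nat (n choose k) * (of_int (euler_num k) / 2 ^ k) * (x - 1/2) ^ (n - k))"

end

theory Submission
  imports Defs "HOL-Analysis.Analysis"
begin

text \<open>
  Write \<open>F\<^sub>N(s, t; x, y)\<close> for the alternating convolution \<open>binom_conv N s t P Q x y\<close> of two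
  Appell sequences. Its derivative in \<open>x\<close> (in \<open>y\<close>) is \<open>t F\<^sub>N\<^sub>-\<^sub>1(s, t - 1)\<close> (\<open>- s F\<^sub>N\<^sub>-\<^sub>1(s - 1, t)\<close>),
  and the absorption identity \<open>s F(r, s - 1) + r F(r - 1, s) = (r + s - N) F(r, s)\<close> makes the
  derivatives of the cyclic sums
    \<open>r F\<^sub>N(s, t; x, y) + s F\<^sub>N(t, r; y, z) + t F\<^sub>N(r, s; z, x)\<close>  (Bernoulli, \<open>z = 1 - x - y\<close>),
    \<open>r/2 F\<^sub>N(s, t; x, y) + F\<^sub>N\<^sub>+\<^sub>1(t, r; y, z) - F\<^sub>N\<^sub>+\<^sub>1(r, s; z, x)\<close>  (Euler)
  sums of the same shape for \<open>N - 1\<close>, as long as \<open>r + s + t = N\<close>. By induction on \<open>N\<close> both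
  sums are therefore constant, and the constant is \<open>0\<close>: for Bernoulli polynomials the
  integral over \<open>x \<in> [0, 1]\<close> vanishes by the classical formula for \<open>\<integral> B\<^sub>a B\<^sub>b\<close>, for Euler
  polynomials the values at \<open>x = 0\<close> and \<open>x = 1\<close> cancel because \<open>E\<^sub>m(1) + E\<^sub>m(0) = 0\<close> for \<open>m \<ge> 1\<close>.
  The corollary is the case \<open>s = t = n\<close> at the point \<open>(1 - x, y)\<close>, with \<open>r = l - n\<close> for
  Bernoulli and \<open>r = l - n - 1\<close> for Euler polynomials; for \<open>y = x\<close> one uses
  \<open>(m + 1) E\<^sub>m(0) = -2 (2\<^sup>m\<^sup>+\<^sup>1 - 1) B\<^sub>m\<^sub>+\<^sub>1\<close>.
\<close>

section \<open>Finite sums and binomial coefficients\<close>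

lemma sum_atMost_eq_single:
  assumes "j \<le> N" and "\<And>k. k \<le> N \<Longrightarrow> k \<noteq> j \<Longrightarrow> f k = 0"
  shows "(\<Sum>k\<le>(N::nat). f k) = (f j :: 'a :: comm_monoid_add)"
proof -
  have "(\<Sum>k\<le>N. f k) = f j + (\<Sum>k\<in>{..N} - {j}. f k)"
    using assms(1) by (intro sum.remove) auto
  also have "(\<Sum>k\<in>{..N} - {j}. f k) = 0"
    using assms(2) by (intro sum.neutral) auto
  finally show ?thesis by simp
qed

lemma sum_atMost_if_ends:
  assumes "N \<ge> 1"
  shows "(\<Sum>k\<le>(N::nat). if k = 0 \<or> k = N then 0 else f k) = (\<Sum>k\<le>N. f k) - f 0 - (f N :: 'a::ab_group_add)"
proof -
  have "(\<Sum>k\<le>N. f k) =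
      (\<Sum>k\<le>N. (if k = 0 \<or> k = N then 0 else f k) + (if k = 0 then f k else 0) + (if k = N then f k else 0))"
    using assms by (intro sum.cong) auto
  then show ?thesis
    by (simp add: sum.distrib)
qed

lemma neg_one_power_diff:
  assumes "k \<le> N"
  shows "(-1) ^ (N - k) = ((-1) ^ N * (-1) ^ k :: 'a::comm_ring_1)"
proof -
  obtain d where "N = k + d"
    using assms le_Suc_ex by blast
  then show ?thesis
    by (cases "even k") (simp_all add: power_add neg_one_even_power neg_one_odd_power)
qed

lemma fact_mult_gbinomial_Suc:
  "fact (Suc k) * (a gchoose Suc k) = (a - of_nat k) * (fact k * (a gchoose k :: 'a::field_char_0))"
  using gbinomial_mult_1[of a k] by (simp add: algebra_simps)

lemma sum_fact_gbinomial_telescope: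
  fixes r s :: "'a::field_char_0"
  shows "(of_nat N - r - s) *
      (\<Sum>k\<le>N. (-1) ^ k * (fact k * (r gchoose k)) * (fact (N - k) * (s gchoose (N - k)))) =
    (-1) ^ Suc N * (fact (Suc N) * (r gchoose Suc N)) - fact (Suc N) * (s gchoose Suc N)"
proof -
  define \<beta> where
    "\<beta> k = (-1) ^ k * (fact k * (r gchoose k)) * (fact (Suc N - k) * (s gchoose (Suc N - k)))" for k
  have "\<beta> (Suc k) - \<beta> k =
      (of_nat N - r - s) * ((-1) ^ k * (fact k * (r gchoose k)) * (fact (N - k) * (s gchoose (N - k))))"
    if "k \<le> N" for k
  proof -
    have "Suc N - k = Suc (N - k)" and "of_nat (N - k) = (of_nat N - of_nat k :: 'a)"
      using that by (simp_all add: of_nat_diff)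
    then show ?thesis
      unfolding \<beta>_def by (simp only: diff_Suc_Suc fact_mult_gbinomial_Suc) (simp add: algebra_simps)
  qed
  then have "(of_nat N - r - s) *
      (\<Sum>k\<le>N. (-1) ^ k * (fact k * (r gchoose k)) * (fact (N - k) * (s gchoose (N - k)))) =
      (\<Sum>k<Suc N. \<beta> (Suc k) - \<beta> k)"
    by (simp add: sum_distrib_left lessThan_Suc_atMost)
  also have "\<dots> = \<beta> (Suc N) - \<beta> 0"
    by (rule sum_lessThan_telescope)
  finally show ?thesis
    by (simp add: \<beta>_def)
qed

section \<open>Appell sequences\<close>

lemma DERIV_zero_imp_eq:
  fixes f :: "'a::real_normed_field \<Rightarrow> 'a"
  assumes "\<And>z. (f has_field_derivative 0) (at z)"
  shows "f x = f y"
proof -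
  obtain c where "\<forall>z\<in>UNIV. f z = c"
    using has_field_derivative_zero_constant[of UNIV f] assms by auto
  then show ?thesis by simp
qed

definition appell :: "(nat \<Rightarrow> complex \<Rightarrow> complex) \<Rightarrow> bool" where
  "appell P \<longleftrightarrow> (\<forall>n z. (P n has_field_derivative of_nat n * P (n - 1) z) (at z))"

lemma appellD: "appell P \<Longrightarrow> (P n has_field_derivative of_nat n * P (n - 1) z) (at z)"
  by (simp add: appell_def)

lemma appell_DERIV_chain:
  assumes "appell P" and "(f has_field_derivative f') (at x)"
  shows "((\<lambda>x. P n (f x)) has_field_derivative of_nat n * P (n - 1) (f x) * f') (at x)"
  using DERIV_chain'[OF assms(2) appellD[OF assms(1)]] by (simp add: mult.assoc)

lemma appell_add: "appell P \<Longrightarrow> appell Q \<Longrightarrow> appell (\<lambda>n z. P n z + Q n z)"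
  unfolding appell_def by (auto intro!: derivative_eq_intros simp: algebra_simps)

lemma appell_diff: "appell P \<Longrightarrow> appell Q \<Longrightarrow> appell (\<lambda>n z. P n z - Q n z)"
  unfolding appell_def by (auto intro!: derivative_eq_intros simp: algebra_simps)

lemma appell_cmult: "appell P \<Longrightarrow> appell (\<lambda>n z. c * P n z)"
  unfolding appell_def by (auto intro!: derivative_eq_intros simp: algebra_simps)

lemma appell_affine:
  assumes "appell P" and "c \<noteq> 0"
  shows "appell (\<lambda>n z. c ^ n * P n ((z + d) / c))"
  unfolding appell_def
proof (intro allI)
  fix n z
  have "((\<lambda>z. c ^ n * P n ((z + d) / c)) has_field_derivative
      c ^ n * (of_nat n * P (n - 1) ((z + d) / c) * (1 / c))) (at z)"
    using assms(2) by (intro DERIV_cmult appell_DERIV_chain[OF assms(1)]) (auto intro!: derivative_eq_intros)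
  moreover have "c ^ n * (of_nat n * P (n - 1) ((z + d) / c) * (1 / c)) =
      of_nat n * (c ^ (n - 1) * P (n - 1) ((z + d) / c))"
    using assms(2) by (cases n) (simp_all add: field_simps)
  ultimately show "((\<lambda>z. c ^ n * P n ((z + d) / c)) has_field_derivative
      of_nat n * (c ^ (n - 1) * P (n - 1) ((z + d) / c))) (at z)"
    by simp
qed

lemma appell_Suc_divide:
  assumes "appell P" and "\<And>z. P 0 z = 0"
  shows "appell (\<lambda>n z. P (Suc n) z / of_nat (Suc n))"
  unfolding appell_def
proof (intro allI)
  fix n z
  have "((\<lambda>z. P (Suc n) z / of_nat (Suc n)) has_field_derivative P n z) (at z)"
    using DERIV_cdivide[OF appellD[OF assms(1), of "Suc n" z], of "of_nat (Suc n)"]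
    by (simp del: of_nat_Suc)
  moreover have "P n z = of_nat n * (P (Suc (n - 1)) z / of_nat (Suc (n - 1)))"
    using assms(2) by (cases n) (simp_all del: of_nat_Suc)
  ultimately show "((\<lambda>z. P (Suc n) z / of_nat (Suc n)) has_field_derivative
      of_nat n * (P (Suc (n - 1)) z / of_nat (Suc (n - 1)))) (at z)"
    by simp
qed

lemma appell_binomial_sum:
  "appell (\<lambda>n x. \<Sum>k\<le>n. of_nat (n choose k) * c k * (x - a) ^ (n - k))"
  unfolding appell_def
proof (intro allI)
  fix n z
  have "((\<lambda>x. \<Sum>k\<le>n. of_nat (n choose k) * c k * (x - a) ^ (n - k)) has_field_derivative
      (\<Sum>k\<le>n. of_nat (n choose k) * c k * (of_nat (n - k) * (z - a) ^ (n - k - 1)))) (at z)"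
    by (auto intro!: derivative_eq_intros DERIV_sum)
  moreover have "(\<Sum>k\<le>n. of_nat (n choose k) * c k * (of_nat (n - k) * (z - a) ^ (n - k - 1))) =
      of_nat n * (\<Sum>k\<le>n - 1. of_nat ((n - 1) choose k) * c k * (z - a) ^ (n - 1 - k))"
  proof (cases n)
    case (Suc m)
    have absorb: "of_nat (n choose k) * of_nat (n - k) = (of_nat n * of_nat (m choose k) :: complex)" for k
      using binomial_absorb_comp[of n k] Suc by (metis diff_Suc_1 mult.commute of_nat_mult)
    have "(\<Sum>k\<le>m. of_nat (n choose k) * c k * (of_nat (n - k) * (z - a) ^ (n - k - 1))) =
        (\<Sum>k\<le>m. (of_nat (n choose k) * of_nat (n - k)) * (c k * (z - a) ^ (m - k)))"
      using Suc by (intro sum.cong) (simp_all add: mult_ac)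
    also have "\<dots> = of_nat n * (\<Sum>k\<le>m. of_nat (m choose k) * c k * (z - a) ^ (m - k))"
      by (simp add: absorb sum_distrib_left mult_ac)
    finally show ?thesis
      using Suc by (simp add: sum.atMost_Suc)
  qed simp
  ultimately show "((\<lambda>x. \<Sum>k\<le>n. of_nat (n choose k) * c k * (x - a) ^ (n - k)) has_field_derivative
      of_nat n * (\<Sum>k\<le>n - 1. of_nat ((n - 1) choose k) * c k * (z - a) ^ (n - 1 - k))) (at z)"
    by simp
qed

lemma appell_eq_if_ends_add_eq:
  assumes P: "appell P" and Q: "appell Q" and "\<And>z. P 0 z = Q 0 z"
    and ends: "\<And>m. m \<ge> 1 \<Longrightarrow> P m 1 + P m 0 = Q m 1 + Q m 0"
  shows "P m z = Q m z"
proof -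
  define D where "D = (\<lambda>n z. P n z - Q n z)"
  have D: "appell D" unfolding D_def by (rule appell_diff[OF P Q])
  have "D m z = 0" for z
  proof (induction m arbitrary: z)
    case 0
    show ?case using assms(3) by (simp add: D_def)
  next
    case (Suc m)
    have "(D (Suc m) has_field_derivative 0) (at w)" for w
      using appellD[OF D, of "Suc m" w] Suc.IH by simp
    then have const: "D (Suc m) w = D (Suc m) 0" for w
      by (rule DERIV_zero_imp_eq)
    have "D (Suc m) 1 + D (Suc m) 0 = 0"
      using ends[of "Suc m"] by (simp add: D_def algebra_simps)
    then show ?case using const[of 1] const[of z] by simp
  qed
  then show ?thesis by (simp add: D_def)
qed

lemma appell_eq_if_ends_diff_eq:
  assumes P: "appell P" and Q: "appell Q" and "\<And>z. P 0 z = Q 0 z"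
    and ends: "\<And>m. m \<ge> 2 \<Longrightarrow> P m 1 - P m 0 = Q m 1 - Q m 0"
  shows "P m z = Q m z"
proof -
  define D where "D = (\<lambda>n z. P n z - Q n z)"
  have D: "appell D" unfolding D_def by (rule appell_diff[OF P Q])
  have "D m z = 0" for z
  proof (induction m arbitrary: z)
    case 0
    show ?case using assms(3) by (simp add: D_def)
  next
    case (Suc m)
    let ?m = "Suc (Suc m)"
    have "(D (Suc m) has_field_derivative 0) (at w)" for w
      using appellD[OF D, of "Suc m" w] Suc.IH by simp
    then have const: "D (Suc m) w = D (Suc m) 0" for w
      by (rule DERIV_zero_imp_eq)
    define c where "c = D (Suc m) 0"
    \<comment> \<open>\<open>D (Suc m)\<close> is the constant \<open>c\<close>, so \<open>D ?m\<close> is affine with slope \<open>?m * c\<close>; equal ends force \<open>c = 0\<close>.\<close>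
    have "((\<lambda>w. D ?m w - of_nat ?m * c * w) has_field_derivative 0) (at w)" for w
      using appellD[OF D, of ?m w] const[of w]
      by (auto intro!: derivative_eq_intros simp: c_def simp del: of_nat_Suc)
    then have "D ?m 1 - of_nat ?m * c * 1 = D ?m 0 - of_nat ?m * c * 0"
      by (rule DERIV_zero_imp_eq)
    moreover have "D ?m 1 = D ?m 0"
      using ends[of ?m] by (simp add: D_def algebra_simps)
    ultimately have "c = 0" by (simp del: of_nat_Suc)
    then show ?case using const[of z] by (simp add: c_def)
  qed
  then show ?thesis by (simp add: D_def)
qed

section \<open>Bernoulli and Euler numbers and polynomials\<close>

declare bernoulli_num.simps [simp del] euler_num.simps [simp del]

abbreviation B :: "nat \<Rightarrow> complex \<Rightarrow> complex" where "B \<equiv> bernoulli_poly"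

abbreviation E :: "nat \<Rightarrow> complex \<Rightarrow> complex" where "E \<equiv> euler_poly"

abbreviation bn :: "nat \<Rightarrow> complex" where "bn k \<equiv> of_rat (bernoulli_num k)"

lemma bernoulli_num_0 [simp]: "bernoulli_num 0 = 1"
  by (subst bernoulli_num.simps) simp

lemma bernoulli_num_1 [simp]: "bernoulli_num (Suc 0) = - 1 / 2"
  by (subst bernoulli_num.simps) simp

lemma euler_num_0 [simp]: "euler_num 0 = 1"
  by (subst euler_num.simps) simp

lemma euler_num_1 [simp]: "euler_num (Suc 0) = 0"
proof -
  have "{k. k < Suc 0 \<and> even (Suc 0 - k)} = {}" by auto
  then show ?thesis by (subst euler_num.simps) simp
qed

lemma sum_binomial_bernoulli_num:
  assumes "n \<ge> 1"
  shows "(\<Sum>k\<le>n. of_nat (Suc n choose k) * bernoulli_num k) = 0"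
proof -
  have "of_nat (Suc n) * bernoulli_num n = - (\<Sum>k<n. of_nat (Suc n choose k) * bernoulli_num k)"
    using assms by (subst bernoulli_num.simps) (simp del: of_nat_Suc)
  then show ?thesis by (simp add: lessThan_Suc_atMost[symmetric] del: of_nat_Suc)
qed

lemma sum_binomial_euler_num:
  assumes "n \<ge> 1"
  shows "(\<Sum>k | k \<le> n \<and> even (n - k). of_nat (n choose k) * euler_num k) = 0"
proof -
  have "{k. k \<le> n \<and> even (n - k)} = insert n {k. k < n \<and> even (n - k)}" by auto
  moreover have "euler_num n = - (\<Sum>k | k < n \<and> even (n - k). of_nat (n choose k) * euler_num k)"
    using assms by (subst euler_num.simps) simp
  ultimately show ?thesis by simp
qed

lemma appell_bernoulli_poly: "appell B"
  using appell_binomial_sum[of "\<lambda>k. bn k" 0] by (simp add: bernoulli_poly_def [abs_def])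

lemma appell_euler_poly: "appell E"
  using appell_binomial_sum[of "\<lambda>k. of_int (euler_num k) / 2 ^ k" "1/2"]
  by (simp add: euler_poly_def [abs_def])

lemma bernoulli_poly_0 [simp]: "B 0 z = 1"
  by (simp add: bernoulli_poly_def)

lemma euler_poly_0 [simp]: "E 0 z = 1"
  by (simp add: euler_poly_def)

lemma bernoulli_poly_1: "B (Suc 0) z = z - 1 / 2"
  by (simp add: bernoulli_poly_def of_rat_minus of_rat_divide)

lemma euler_poly_1: "E (Suc 0) z = z - 1 / 2"
  by (simp add: euler_poly_def)

lemma bernoulli_poly_at_0: "B n 0 = bn n"
  unfolding bernoulli_poly_def by (subst sum_atMost_eq_single[of n]) auto

lemma bernoulli_poly_at_1: "B n 1 = bn n + (if n = 1 then 1 else 0)"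
proof (cases "n \<ge> 2")
  case True
  then obtain m where m: "n = Suc m" "m \<ge> 1"
    by (cases n) auto
  have "B n 1 = of_rat (\<Sum>k\<le>n. of_nat (n choose k) * bernoulli_num k)"
    by (simp add: bernoulli_poly_def of_rat_sum of_rat_mult)
  also have "(\<Sum>k\<le>n. of_nat (n choose k) * bernoulli_num k) = bernoulli_num n"
    using sum_binomial_bernoulli_num[OF m(2)] m(1) by (simp add: sum.atMost_Suc del: of_nat_Suc)
  finally show ?thesis using True by simp
next
  case False
  then have "n = 0 \<or> n = Suc 0" by auto
  then show ?thesis by (auto simp: bernoulli_poly_1 of_rat_minus of_rat_divide)
qed

lemma euler_poly_at_1_add_at_0: "E n 1 + E n 0 = (if n = 0 then 2 else 0)"
proof -
  define f where "f k = of_nat (n choose k) * (of_int (euler_num k) :: complex)" for k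
  have "E n 1 + E n 0 = (\<Sum>k\<le>n. f k / 2 ^ k * ((1/2) ^ (n - k) + (- 1/2) ^ (n - k)))"
    by (simp add: euler_poly_def f_def sum.distrib [symmetric] algebra_simps)
  also have "\<dots> = (\<Sum>k\<le>n. if even (n - k) then 2 * f k else 0) / 2 ^ n"
    unfolding sum_divide_distrib
  proof (rule sum.cong [OF refl])
    fix k assume "k \<in> {..n}"
    then have "(2::complex) ^ n = 2 ^ k * 2 ^ (n - k)"
      by (simp flip: power_add)
    moreover have "(- 1/2 :: complex) ^ (n - k) = (- 1) ^ (n - k) / 2 ^ (n - k)"
      by (simp add: power_minus' power_one_over)
    ultimately show "f k / 2 ^ k * ((1/2) ^ (n - k) + (- 1/2) ^ (n - k)) =
        (if even (n - k) then 2 * f k else 0) / 2 ^ n"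
      by (auto simp: power_divide field_simps)
  qed
  \<comment> \<open>What survives is the sum in the recurrence defining the Euler numbers.\<close>
  also have "(\<Sum>k\<le>n. if even (n - k) then 2 * f k else 0) =
      (\<Sum>k | k \<le> n \<and> even (n - k). 2 * f k)"
    by (rule sum.mono_neutral_cong_right) auto
  also have "\<dots> = 2 * (\<Sum>k | k \<le> n \<and> even (n - k). f k)"
    by (simp add: sum_distrib_left)
  finally have "E n 1 + E n 0 = 2 * (\<Sum>k | k \<le> n \<and> even (n - k). f k) / 2 ^ n" .
  moreover have "(\<Sum>k | k \<le> n \<and> even (n - k). f k) = 0" if "n \<ge> 1"
  proof -
    have "(\<Sum>k | k \<le> n \<and> even (n - k). f k) =
        of_int (\<Sum>k | k \<le> n \<and> even (n - k). of_nat (n choose k) * euler_num k)"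
      by (simp add: f_def)
    then show ?thesis
      using sum_binomial_euler_num[OF that] by (simp only: of_int_0)
  qed
  ultimately show ?thesis by auto
qed

lemma bernoulli_poly_reflect: "B m (1 - z) = (-1) ^ m * B m z"
proof -
  have refl: "appell (\<lambda>m z. (-1) ^ m * B m ((z + -1) / -1))"
    by (rule appell_affine[OF appell_bernoulli_poly]) simp
  have "(-1) ^ m * B m ((z + -1) / -1) = B m z"
    by (rule appell_eq_if_ends_diff_eq[OF refl appell_bernoulli_poly])
       (simp_all add: bernoulli_poly_at_0 bernoulli_poly_at_1)
  then have "(-1) ^ m * ((-1) ^ m * B m (1 - z)) = (-1) ^ m * B m z"
    by simp
  then show ?thesis
    by (simp add: mult.assoc [symmetric] flip: power_add)
qed

lemma euler_poly_reflect: "E m (1 - z) = (-1) ^ m * E m z"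
proof -
  have refl: "appell (\<lambda>m z. (-1) ^ m * E m ((z + -1) / -1))"
    by (rule appell_affine[OF appell_euler_poly]) simp
  have "(-1) ^ m * E m ((z + -1) / -1) = E m z"
  proof (rule appell_eq_if_ends_add_eq[OF refl appell_euler_poly])
    fix m :: nat
    assume "m \<ge> 1"
    then show "(-1) ^ m * E m ((1 + -1) / -1) + (-1) ^ m * E m ((0 + -1) / -1) = E m 1 + E m 0"
      using euler_poly_at_1_add_at_0[of m] by (simp flip: distrib_left add: add.commute)
  qed simp
  then have "(-1) ^ m * ((-1) ^ m * E m (1 - z)) = (-1) ^ m * E m z"
    by simp
  then show ?thesis
    by (simp add: mult.assoc [symmetric] flip: power_add)
qed

lemma bernoulli_num_odd_eq_0:
  assumes "odd m" and "m \<noteq> 1"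
  shows "bernoulli_num m = 0"
proof -
  have "B m (1 - 0) = (-1) ^ m * B m 0"
    by (rule bernoulli_poly_reflect)
  then have "bn m = - bn m"
    using assms by (simp add: bernoulli_poly_at_0 bernoulli_poly_at_1)
  then show ?thesis by simp
qed

lemma euler_poly_even_at_0:
  assumes "even m" and "m \<noteq> 0"
  shows "E m 0 = 0"
proof -
  have "E m (1 - 0) = (-1) ^ m * E m 0"
    by (rule euler_poly_reflect)
  then show ?thesis
    using euler_poly_at_1_add_at_0[of m] assms by simp
qed

lemma bernoulli_poly_duplication: "2 ^ m * (B m (z / 2) + B m ((z + 1) / 2)) = 2 * B m z"
proof -
  define P where "P m z = 1 / 2 * (2 ^ m * B m ((z + 0) / 2) + 2 ^ m * B m ((z + 1) / 2))" for m z
  have "appell P"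
    unfolding P_def [abs_def]
    by (intro appell_cmult appell_add appell_affine appell_bernoulli_poly) simp_all
  then have "P m z = B m z"
    by (rule appell_eq_if_ends_diff_eq[OF _ appell_bernoulli_poly])
       (simp_all add: P_def bernoulli_poly_at_0 bernoulli_poly_at_1 algebra_simps)
  then show ?thesis by (simp add: P_def field_simps)
qed

lemma euler_poly_eq_bernoulli_poly:
  "of_nat (Suc m) * E m z = 2 * (B (Suc m) z - 2 ^ Suc m * B (Suc m) (z / 2))"
proof -
  define Q where "Q m z = B m z - 2 ^ m * B m ((z + 0) / 2)" for m z
  define P where "P m z = 2 * (Q (Suc m) z / of_nat (Suc m))" for m z
  have "appell Q"
    unfolding Q_def [abs_def]
    by (intro appell_diff appell_affine appell_bernoulli_poly) simp
  then have "appell P"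
    unfolding P_def [abs_def]
    by (intro appell_cmult appell_Suc_divide[of Q]) (simp_all add: Q_def)
  have Q_ends: "Q m 1 + Q m 0 = 0" if "m \<ge> 2" for m
    using bernoulli_poly_duplication[of m 0] that
    by (simp add: Q_def bernoulli_poly_at_0 bernoulli_poly_at_1 algebra_simps)
  have "P m z = E m z"
  proof (rule appell_eq_if_ends_add_eq[of P E, OF \<open>appell P\<close> appell_euler_poly])
    show "P 0 z = E 0 z" for z
      by (simp add: P_def Q_def bernoulli_poly_1 field_simps)
    show "P m 1 + P m 0 = E m 1 + E m 0" if "m \<ge> 1" for m
    proof -
      have "P m 1 + P m 0 = 2 * (Q (Suc m) 1 + Q (Suc m) 0) / of_nat (Suc m)"
        by (simp add: P_def add_divide_distrib)
      then show ?thesis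
        using Q_ends[of "Suc m"] euler_poly_at_1_add_at_0[of m] that by simp
    qed
  qed
  moreover have "of_nat (Suc m) * P m z = 2 * Q (Suc m) z"
    by (simp add: P_def del: of_nat_Suc)
  ultimately show ?thesis by (simp add: Q_def)
qed

lemma euler_poly_at_0: "of_nat (Suc m) * E m 0 = - 2 * (2 ^ Suc m - 1) * bn (Suc m)"
  using euler_poly_eq_bernoulli_poly[of m 0] by (simp add: bernoulli_poly_at_0 algebra_simps)

section \<open>An alternating binomial convolution\<close>

definition binom_conv ::
  "nat \<Rightarrow> complex \<Rightarrow> complex \<Rightarrow> (nat \<Rightarrow> complex \<Rightarrow> complex) \<Rightarrow> (nat \<Rightarrow> complex \<Rightarrow> complex) \<Rightarrow>
    complex \<Rightarrow> complex \<Rightarrow> complex" where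
  "binom_conv N s t P Q x y =
     (\<Sum>k\<le>N. (-1) ^ k * (s gchoose k) * (t gchoose (N - k)) * P (N - k) x * Q k y)"

lemma binom_conv_0 [simp]: "binom_conv 0 s t P Q x y = P 0 x * Q 0 y"
  by (simp add: binom_conv_def)

lemma binom_conv_absorb:
  "s * binom_conv N r (s - 1) P Q x y + r * binom_conv N (r - 1) s P Q x y =
     (r + s - of_nat N) * binom_conv N r s P Q x y"
proof -
  have "s * ((-1) ^ k * (r gchoose k) * ((s - 1) gchoose (N - k)) * P (N - k) x * Q k y) +
      r * ((-1) ^ k * ((r - 1) gchoose k) * (s gchoose (N - k)) * P (N - k) x * Q k y) =
      (r + s - of_nat N) * ((-1) ^ k * (r gchoose k) * (s gchoose (N - k)) * P (N - k) x * Q k y)"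
    if "k \<le> N" for k
  proof -
    let ?c = "(-1) ^ k * P (N - k) x * Q k y"
    have "s * ((-1) ^ k * (r gchoose k) * ((s - 1) gchoose (N - k)) * P (N - k) x * Q k y) +
        r * ((-1) ^ k * ((r - 1) gchoose k) * (s gchoose (N - k)) * P (N - k) x * Q k y) =
        ?c * ((r gchoose k) * (s * ((s - 1) gchoose (N - k))) + (s gchoose (N - k)) * (r * ((r - 1) gchoose k)))"
      by (simp add: algebra_simps)
    also have "\<dots> = ?c * ((r gchoose k) * ((s - of_nat (N - k)) * (s gchoose (N - k))) +
        (s gchoose (N - k)) * ((r - of_nat k) * (r gchoose k)))"
      by (simp only: gbinomial_absorb_comp)
    also have "\<dots> = (r + s - of_nat N) * ((-1) ^ k * (r gchoose k) * (s gchoose (N - k)) * P (N - k) x * Q k y)"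
      using that by (simp add: of_nat_diff algebra_simps)
    finally show ?thesis .
  qed
  then show ?thesis
    unfolding binom_conv_def sum_distrib_left sum.distrib [symmetric]
    by (intro sum.cong) auto
qed

lemma sum_binom_conv_absorb_fst:
  "(\<Sum>k\<le>Suc M. (-1) ^ k * (s gchoose k) * (t gchoose (Suc M - k)) *
      (of_nat (Suc M - k) * P (M - k) x * Q k y)) = t * binom_conv M s (t - 1) P Q x y"
proof -
  have "(-1) ^ k * (s gchoose k) * (t gchoose (Suc M - k)) * (of_nat (Suc M - k) * P (M - k) x * Q k y) =
      t * ((-1) ^ k * (s gchoose k) * ((t - 1) gchoose (M - k)) * P (M - k) x * Q k y)"
    if "k \<le> M" for k
  proof -
    let ?c = "(-1) ^ k * (s gchoose k) * P (M - k) x * Q k y"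
    have "Suc M - k = Suc (M - k)"
      using that by simp
    then have "(-1) ^ k * (s gchoose k) * (t gchoose (Suc M - k)) * (of_nat (Suc M - k) * P (M - k) x * Q k y) =
        ?c * (of_nat (Suc (M - k)) * (t gchoose Suc (M - k)))"
      by (simp only:) (simp add: algebra_simps)
    also have "\<dots> = ?c * (t * ((t - 1) gchoose (M - k)))"
      by (simp only: gbinomial_absorption)
    finally show ?thesis
      by (simp add: algebra_simps)
  qed
  then show ?thesis
    unfolding binom_conv_def sum_distrib_left
    by (simp add: sum.atMost_Suc, intro sum.cong) auto
qed

lemma sum_binom_conv_absorb_snd:
  "(\<Sum>k\<le>Suc M. (-1) ^ k * (s gchoose k) * (t gchoose (Suc M - k)) *
      (P (Suc M - k) x * (of_nat k * Q (k - 1) y))) = - s * binom_conv M (s - 1) t P Q x y"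
proof -
  have term_eq: "(-1) ^ Suc k * (s gchoose Suc k) * (t gchoose (Suc M - Suc k)) *
      (P (Suc M - Suc k) x * (of_nat (Suc k) * Q (Suc k - 1) y)) =
      - s * ((-1) ^ k * ((s - 1) gchoose k) * (t gchoose (M - k)) * P (M - k) x * Q k y)" for k
  proof -
    let ?c = "(-1) ^ k * (t gchoose (M - k)) * P (M - k) x * Q k y"
    have "(-1) ^ Suc k * (s gchoose Suc k) * (t gchoose (Suc M - Suc k)) *
        (P (Suc M - Suc k) x * (of_nat (Suc k) * Q (Suc k - 1) y)) =
        - ?c * (of_nat (Suc k) * (s gchoose Suc k))"
      by (simp add: algebra_simps del: of_nat_Suc)
    also have "\<dots> = - ?c * (s * ((s - 1) gchoose k))"
      by (simp only: gbinomial_absorption)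
    finally show ?thesis
      by (simp add: algebra_simps)
  qed
  show ?thesis
    unfolding binom_conv_def sum_distrib_left sum.atMost_Suc_shift term_eq by simp
qed

lemma has_field_derivative_binom_conv:
  assumes P: "appell P" and Q: "appell Q"
    and a: "(a has_field_derivative a') (at x)" and b: "(b has_field_derivative b') (at x)"
  shows "((\<lambda>x. binom_conv (Suc M) s t P Q (a x) (b x)) has_field_derivative
     a' * t * binom_conv M s (t - 1) P Q (a x) (b x) - b' * s * binom_conv M (s - 1) t P Q (a x) (b x)) (at x)"
proof -
  let ?N = "Suc M"
  have "((\<lambda>x. binom_conv ?N s t P Q (a x) (b x)) has_field_derivative
      (\<Sum>k\<le>?N. (-1) ^ k * (s gchoose k) * (t gchoose (?N - k)) *
        (of_nat (?N - k) * P (?N - k - 1) (a x) * a' * Q k (b x) +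
         P (?N - k) (a x) * (of_nat k * Q (k - 1) (b x) * b')))) (at x)"
    unfolding binom_conv_def
  proof (rule DERIV_sum)
    fix k
    have "((\<lambda>x. P (?N - k) (a x) * Q k (b x)) has_field_derivative
        of_nat (?N - k) * P (?N - k - 1) (a x) * a' * Q k (b x) +
        P (?N - k) (a x) * (of_nat k * Q (k - 1) (b x) * b')) (at x)"
      using DERIV_mult[OF appell_DERIV_chain[OF P a, of "?N - k"] appell_DERIV_chain[OF Q b, of k]]
      by (simp add: algebra_simps)
    from DERIV_cmult[OF this, of "(-1) ^ k * (s gchoose k) * (t gchoose (?N - k))"]
    show "((\<lambda>x. (-1) ^ k * (s gchoose k) * (t gchoose (?N - k)) * P (?N - k) (a x) * Q k (b x))
        has_field_derivative (-1) ^ k * (s gchoose k) * (t gchoose (?N - k)) *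
        (of_nat (?N - k) * P (?N - k - 1) (a x) * a' * Q k (b x) +
         P (?N - k) (a x) * (of_nat k * Q (k - 1) (b x) * b'))) (at x)"
      by (simp add: mult.assoc)
  qed
  moreover have "(\<Sum>k\<le>?N. (-1) ^ k * (s gchoose k) * (t gchoose (?N - k)) *
        (of_nat (?N - k) * P (?N - k - 1) (a x) * a' * Q k (b x) +
         P (?N - k) (a x) * (of_nat k * Q (k - 1) (b x) * b'))) =
      a' * (\<Sum>k\<le>?N. (-1) ^ k * (s gchoose k) * (t gchoose (?N - k)) *
        (of_nat (?N - k) * P (M - k) (a x) * Q k (b x))) +
      b' * (\<Sum>k\<le>?N. (-1) ^ k * (s gchoose k) * (t gchoose (?N - k)) *
        (P (?N - k) (a x) * (of_nat k * Q (k - 1) (b x))))"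
    by (simp add: sum_distrib_left sum.distrib [symmetric] algebra_simps)
  also have "\<dots> = a' * t * binom_conv M s (t - 1) P Q (a x) (b x) - b' * s * binom_conv M (s - 1) t P Q (a x) (b x)"
    by (simp only: sum_binom_conv_absorb_fst sum_binom_conv_absorb_snd) (simp add: algebra_simps)
  ultimately show ?thesis
    by simp
qed

lemma binom_conv_reflect_fst:
  assumes "\<And>m z. P m (1 - z) = (-1) ^ m * P m z"
  shows "binom_conv N s t P Q (1 - x) y =
    (-1) ^ N * (\<Sum>k\<le>N. (s gchoose k) * (t gchoose (N - k)) * P (N - k) x * Q k y)"
proof -
  have "(-1) ^ k * (-1) ^ (N - k) = ((-1) ^ N :: complex)" if "k \<le> N" for k
    using that by (simp flip: power_add)
  then show ?thesis
    unfolding binom_conv_def assms sum_distrib_left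
    by (intro sum.cong refl) (simp add: algebra_simps)
qed

lemma binom_conv_reflect_snd:
  assumes "\<And>m z. Q m (1 - z) = (-1) ^ m * Q m z"
  shows "binom_conv N s t P Q x (1 - y) =
    (\<Sum>k\<le>N. (s gchoose k) * (t gchoose (N - k)) * P (N - k) x * Q k y)"
proof -
  have "(-1) ^ k * (-1) ^ k = (1 :: complex)" for k
    by (simp flip: power_add)
  then show ?thesis
    unfolding binom_conv_def assms
    by (intro sum.cong refl) (simp add: algebra_simps)
qed

lemma binom_conv_swap: "binom_conv N s t P Q x y = (-1) ^ N * binom_conv N t s Q P y x"
proof -
  have "binom_conv N s t P Q x y = (\<Sum>k = 0..N. (-1) ^ (N - k) * (s gchoose (N - k)) *
      (t gchoose (N - (N - k))) * P (N - (N - k)) x * Q (N - k) y)"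
    unfolding binom_conv_def atMost_atLeast0 by (subst sum.atLeastAtMost_rev) simp
  also have "\<dots> = (-1) ^ N * binom_conv N t s Q P y x"
    unfolding binom_conv_def atMost_atLeast0 sum_distrib_left
    by (intro sum.cong refl) (auto simp: neg_one_power_diff algebra_simps)
  finally show ?thesis .
qed

lemma binom_conv_of_nat_reflect_fst:
  assumes "\<And>m z. P m (1 - z) = (-1) ^ m * P m z"
  shows "binom_conv N (of_nat n) (of_nat n) P Q (1 - x) y = (-1) ^ N *
    (\<Sum>k = n - N..n. of_nat (n choose k) * of_nat (n choose (N + k - n)) * P (N + k - n) x * Q (n - k) y)"
proof -
  define g where "g j = of_nat (n choose j) * of_nat (n choose (N - j)) * P (N - j) x * Q j y" for j
  have "binom_conv N (of_nat n) (of_nat n) P Q (1 - x) y = (-1) ^ N * (\<Sum>j\<le>N. g j)"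
    by (simp add: binom_conv_reflect_fst[where P = P, OF assms] g_def binomial_gbinomial)
  also have "(\<Sum>j\<le>N. g j) = (\<Sum>j\<le>min N n. g j)"
    by (rule sum.mono_neutral_right) (auto simp: g_def)
  also have "\<dots> = (\<Sum>k = n - N..n. g (n - k))"
    by (rule sum.reindex_bij_witness[of _ "\<lambda>j. n - j" "\<lambda>k. n - k"]) auto
  also have "\<dots> = (\<Sum>k = n - N..n. of_nat (n choose k) * of_nat (n choose (N + k - n)) * P (N + k - n) x * Q (n - k) y)"
    by (intro sum.cong refl) (auto simp: g_def binomial_symmetric [symmetric] Nat.diff_diff_right)
  finally show ?thesis .
qed

lemma binom_conv_of_nat_neg:
  assumes "l < n"
  shows "binom_conv (n + l) (of_nat n) (of_nat l - of_nat n - of_nat c) P Q u v = (-1) ^ (n + l) *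
    (\<Sum>k = 0..n. of_nat (n choose k) * of_nat ((k + n + c - 1) choose (k + l)) * P (k + l) u * Q (n - k) v)"
proof -
  define g where
    "g j = of_nat (n choose j) * of_nat ((2 * n - j + c - 1) choose (n + l - j)) * P (n + l - j) u * Q j v" for j
  have "(-1) ^ j * (of_nat n gchoose j) * ((of_nat l - of_nat n - of_nat c) gchoose (n + l - j)) *
      P (n + l - j) u * Q j v = (-1) ^ (n + l) * g j" if "j \<le> n + l" for j
  proof (cases "j \<le> n")
    case True
    have "of_nat (n + l - j) - (of_nat l - of_nat n - of_nat c) - 1 = (of_nat (2 * n - j + c - 1) :: complex)"
      using True assms by (simp add: of_nat_diff)
    then have "((of_nat l - of_nat n - of_nat c) gchoose (n + l - j)) =
        (-1) ^ (n + l - j) * (of_nat ((2 * n - j + c - 1) choose (n + l - j)) :: complex)"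
      by (subst gbinomial_negated_upper) (simp add: binomial_gbinomial)
    with that show ?thesis
      by (simp add: g_def neg_one_power_diff binomial_gbinomial [symmetric] algebra_simps)
  qed (simp add: g_def binomial_gbinomial [symmetric])
  then have "binom_conv (n + l) (of_nat n) (of_nat l - of_nat n - of_nat c) P Q u v = (-1) ^ (n + l) * (\<Sum>j\<le>n + l. g j)"
    unfolding binom_conv_def sum_distrib_left by (intro sum.cong) auto
  also have "(\<Sum>j\<le>n + l. g j) = (\<Sum>j = 0..n. g j)"
    by (rule sum.mono_neutral_right) (auto simp: g_def)
  also have "\<dots> = (\<Sum>k = 0..n. g (n - k))"
    by (rule sum.reindex_bij_witness[of _ "\<lambda>j. n - j" "\<lambda>k. n - k"]) auto
  also have "\<dots> = (\<Sum>k = 0..n. of_nat (n choose k) * of_nat ((k + n + c - 1) choose (k + l)) * P (k + l) u * Q (n - k) v)"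
  proof (intro sum.cong refl)
    fix k
    assume "k \<in> {0..n}"
    then have "n + l - (n - k) = k + l" "2 * n - (n - k) + c - 1 = k + n + c - 1" "n choose (n - k) = n choose k"
      by (auto simp: binomial_symmetric [symmetric])
    then show "g (n - k) = of_nat (n choose k) * of_nat ((k + n + c - 1) choose (k + l)) * P (k + l) u * Q (n - k) v"
      unfolding g_def by (simp only:)
  qed
  finally show ?thesis .
qed

lemma binom_conv_of_nat_neg_reflect_snd:
  assumes "l < n" and reflect: "\<And>m z. Q m (1 - z) = (-1) ^ m * Q m z"
  shows "binom_conv (n + l) (of_nat l - of_nat n - of_nat c) (of_nat n) P Q u (1 - x) = (-1) ^ (n + l) *
    (\<Sum>k = 0..n. of_nat (n choose k) * of_nat ((k + n + c - 1) choose (k + l)) *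
      ((-1) ^ (n - k) * Q (k + l) x) * P (n - k) u)"
proof -
  have "(-1) ^ (n + l) * (-1) ^ (n + l) = (1 :: complex)"
    by (simp flip: power_add)
  then have "binom_conv (n + l) (of_nat l - of_nat n - of_nat c) (of_nat n) P Q u (1 - x) =
      (\<Sum>k = 0..n. of_nat (n choose k) * of_nat ((k + n + c - 1) choose (k + l)) * Q (k + l) (1 - x) * P (n - k) u)"
    by (subst binom_conv_swap) (simp add: binom_conv_of_nat_neg[OF assms(1)] mult.assoc [symmetric])
  also have "\<dots> = (-1) ^ (n + l) * (\<Sum>k = 0..n. of_nat (n choose k) * of_nat ((k + n + c - 1) choose (k + l)) *
      ((-1) ^ (n - k) * Q (k + l) x) * P (n - k) u)"
    unfolding reflect sum_distrib_left
  proof (intro sum.cong refl)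
    fix k
    assume "k \<in> {0..n}"
    then have "(-1) ^ (k + l) = ((-1) ^ (n + l) * (-1) ^ (n - k) :: complex)"
      by (cases "even n"; cases "even k") (simp_all add: neg_one_power_diff power_add)
    then show "of_nat (n choose k) * of_nat ((k + n + c - 1) choose (k + l)) * ((-1) ^ (k + l) * Q (k + l) x) * P (n - k) u =
        (-1) ^ (n + l) * (of_nat (n choose k) * of_nat ((k + n + c - 1) choose (k + l)) *
        ((-1) ^ (n - k) * Q (k + l) x) * P (n - k) u)"
      by (simp only:) (simp add: algebra_simps)
  qed
  finally show ?thesis .
qed

section \<open>Integrals over the unit interval\<close>

lemma has_integral_01_of_DERIV:
  fixes F f :: "complex \<Rightarrow> complex"
  assumes "\<And>z. (F has_field_derivative f z) (at z)"
  shows "((\<lambda>u::real. f (of_real u)) has_integral (F 1 - F 0)) {0..1}"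
proof -
  have "((\<lambda>u. F (of_real u)) has_vector_derivative f (of_real u)) (at u within {0..1})" for u :: real
    by (rule has_vector_derivative_real_field[OF assms])
  from fundamental_theorem_of_calculus[of 0 1, OF _ this] show ?thesis
    by simp
qed

lemma has_integral_bernoulli_poly:
  "((\<lambda>u::real. B m (of_real u)) has_integral (if m = 0 then 1 else 0)) {0..1}"
proof -
  have "((\<lambda>z. B (Suc m) z / of_nat (Suc m)) has_field_derivative B m z) (at z)" for z
    using DERIV_cdivide[OF appellD[OF appell_bernoulli_poly, of "Suc m" z], of "of_nat (Suc m)"]
    by (simp del: of_nat_Suc)
  from has_integral_01_of_DERIV[OF this]
  have "((\<lambda>u::real. B m (of_real u)) has_integral
      B (Suc m) 1 / of_nat (Suc m) - B (Suc m) 0 / of_nat (Suc m)) {0..1}" .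
  moreover have "B (Suc m) 1 / of_nat (Suc m) - B (Suc m) 0 / of_nat (Suc m) = (if m = 0 then 1 else 0)"
    by (simp add: bernoulli_poly_at_0 bernoulli_poly_at_1 flip: diff_divide_distrib)
  ultimately show ?thesis by (simp only:)
qed

lemma has_integral_bernoulli_poly_mult_by_parts:
  assumes "((\<lambda>u::real. B (Suc a) (of_real u) * B b (of_real u)) has_integral J) {0..1}"
  shows "((\<lambda>u::real. B a (of_real u) * B (Suc b) (of_real u)) has_integral
    (B (Suc a) 1 * B (Suc b) 1 - B (Suc a) 0 * B (Suc b) 0 - of_nat (Suc b) * J) / of_nat (Suc a)) {0..1}"
proof -
  have "((\<lambda>z. B (Suc a) z * B (Suc b) z) has_field_derivative
      of_nat (Suc a) * (B a z * B (Suc b) z) + of_nat (Suc b) * (B (Suc a) z * B b z)) (at z)" for z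
    using DERIV_mult[OF appellD[OF appell_bernoulli_poly, of "Suc a" z] appellD[OF appell_bernoulli_poly, of "Suc b" z]]
    by (simp add: algebra_simps)
  from has_integral_diff[OF has_integral_01_of_DERIV[OF this] has_integral_mult_right[OF assms, of "of_nat (Suc b)"]]
  have "((\<lambda>u::real. of_nat (Suc a) * (B a (of_real u) * B (Suc b) (of_real u))) has_integral
      B (Suc a) 1 * B (Suc b) 1 - B (Suc a) 0 * B (Suc b) 0 - of_nat (Suc b) * J) {0..1}"
    by simp
  from has_integral_mult_right[OF this, of "1 / of_nat (Suc a)"] show ?thesis
    by (simp del: of_nat_Suc)
qed

lemma has_integral_bernoulli_poly_mult:
  assumes "a \<ge> 1"
  shows "((\<lambda>u::real. B a (of_real u) * B (Suc b) (of_real u)) has_integral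
    (-1) ^ b * fact a * fact (Suc b) / fact (a + Suc b) * bn (a + Suc b)) {0..1}"
  using assms
proof (induction b arbitrary: a)
  case 0
  have "((\<lambda>u::real. B (Suc a) (of_real u) * B 0 (of_real u)) has_integral 0) {0..1}"
    using has_integral_bernoulli_poly[of "Suc a"] by simp
  note by_parts = has_integral_bernoulli_poly_mult_by_parts[OF this]
  have "B (Suc a) 1 * B (Suc 0) 1 - B (Suc a) 0 * B (Suc 0) 0 = bn (Suc a)"
    using 0 by (simp add: bernoulli_poly_at_0 bernoulli_poly_at_1 bernoulli_poly_1 algebra_simps)
  then have "(B (Suc a) 1 * B (Suc 0) 1 - B (Suc a) 0 * B (Suc 0) 0 - of_nat (Suc 0) * 0) / of_nat (Suc a) =
      (-1) ^ 0 * fact a * fact (Suc 0) / fact (a + Suc 0) * bn (a + Suc 0)"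
    by (simp add: field_simps del: of_nat_Suc)
  with by_parts show ?case by (simp only:)
next
  case (Suc b)
  note by_parts = has_integral_bernoulli_poly_mult_by_parts[OF Suc.IH[of "Suc a"]]
  have "B (Suc a) 1 * B (Suc (Suc b)) 1 - B (Suc a) 0 * B (Suc (Suc b)) 0 = 0"
    using Suc.prems by (simp add: bernoulli_poly_at_0 bernoulli_poly_at_1)
  moreover have "fact (Suc a) = of_nat (Suc a) * (fact a :: complex)"
    "fact (Suc (Suc b)) = of_nat (Suc (Suc b)) * (fact (Suc b) :: complex)"
    by (simp_all only: fact_Suc of_nat_mult)
  ultimately have "(B (Suc a) 1 * B (Suc (Suc b)) 1 - B (Suc a) 0 * B (Suc (Suc b)) 0 -
        of_nat (Suc (Suc b)) * ((-1) ^ b * fact (Suc a) * fact (Suc b) / fact (Suc a + Suc b) * bn (Suc a + Suc b))) /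
        of_nat (Suc a) =
      (-1) ^ Suc b * fact a * fact (Suc (Suc b)) / fact (a + Suc (Suc b)) * bn (a + Suc (Suc b))"
    by (simp add: field_simps del: of_nat_Suc fact_Suc)
  with by_parts show ?case by (simp only:)
qed

lemma has_integral_bernoulli_poly_prod:
  assumes "k \<le> N" and "N \<ge> 1"
  shows "((\<lambda>u::real. B (N - k) (of_real u) * B k (of_real u)) has_integral
    (if k = 0 \<or> k = N then 0 else (-1) ^ (k - 1) * fact (N - k) * fact k / fact N * bn N)) {0..1}"
proof (cases "k = 0 \<or> k = N")
  case True
  then show ?thesis
    using has_integral_bernoulli_poly[of N] assms by auto
next
  case False
  then obtain b where "k = Suc b" "N - k \<ge> 1"
    using assms(1) by (cases k) auto
  with has_integral_bernoulli_poly_mult[of "N - k" b] show ?thesis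
    using False assms(1) by simp
qed

lemma has_integral_binom_conv_fst:
  "((\<lambda>u::real. binom_conv N s t B Q (of_real u) y) has_integral (-1) ^ N * (s gchoose N) * Q N y) {0..1}"
proof -
  have "((\<lambda>u::real. \<Sum>k\<le>N. (-1) ^ k * (s gchoose k) * (t gchoose (N - k)) * B (N - k) (of_real u) * Q k y)
      has_integral (\<Sum>k\<le>N. (-1) ^ k * (s gchoose k) * (t gchoose (N - k)) * (if N - k = 0 then 1 else 0) * Q k y))
      {0..1}"
    by (intro has_integral_sum has_integral_mult_left has_integral_mult_right has_integral_bernoulli_poly) auto
  moreover have "(\<Sum>k\<le>N. (-1) ^ k * (s gchoose k) * (t gchoose (N - k)) * (if N - k = 0 then 1 else 0) * Q k y) =
      (-1) ^ N * (s gchoose N) * Q N y"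
    by (subst sum_atMost_eq_single[of N]) auto
  ultimately show ?thesis
    by (simp add: binom_conv_def)
qed

lemma has_integral_binom_conv_snd_reflect:
  "((\<lambda>u::real. binom_conv N s t P B x (1 - of_real u)) has_integral (t gchoose N) * P N x) {0..1}"
proof -
  have "((\<lambda>u::real. \<Sum>k\<le>N. (s gchoose k) * (t gchoose (N - k)) * P (N - k) x * B k (of_real u))
      has_integral (\<Sum>k\<le>N. (s gchoose k) * (t gchoose (N - k)) * P (N - k) x * (if k = 0 then 1 else 0)))
      {0..1}"
    by (intro has_integral_sum has_integral_mult_right has_integral_bernoulli_poly) auto
  moreover have "(\<Sum>k\<le>N. (s gchoose k) * (t gchoose (N - k)) * P (N - k) x * (if k = 0 then 1 else 0)) =
      (t gchoose N) * P N x"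
    by (subst sum_atMost_eq_single[of 0]) auto
  ultimately show ?thesis
    by (simp add: binom_conv_reflect_snd bernoulli_poly_reflect)
qed

lemma has_integral_binom_conv_reflect_diag:
  assumes "N \<ge> 1"
  shows "((\<lambda>u::real. binom_conv N r s B B (1 - of_real u) (of_real u)) has_integral
    (-1) ^ N * (\<Sum>k\<le>N. (r gchoose k) * (s gchoose (N - k)) *
      (if k = 0 \<or> k = N then 0 else (-1) ^ (k - 1) * fact (N - k) * fact k / fact N * bn N))) {0..1}"
proof -
  have "((\<lambda>u::real. \<Sum>k\<le>N. (r gchoose k) * (s gchoose (N - k)) * (B (N - k) (of_real u) * B k (of_real u)))
      has_integral (\<Sum>k\<le>N. (r gchoose k) * (s gchoose (N - k)) *
      (if k = 0 \<or> k = N then 0 else (-1) ^ (k - 1) * fact (N - k) * fact k / fact N * bn N))) {0..1}"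
    using assms by (intro has_integral_sum has_integral_mult_right has_integral_bernoulli_poly_prod) auto
  from has_integral_mult_right[OF this, of "(-1) ^ N"] show ?thesis
    by (simp add: binom_conv_reflect_fst bernoulli_poly_reflect sum_distrib_left mult.assoc)
qed

section \<open>The cyclic identity for Bernoulli polynomials\<close>

lemma sum_gbinomial_bernoulli_poly_prod_integral:
  assumes "N \<ge> 1"
  shows "(\<Sum>k\<le>N. (r gchoose k) * (s gchoose (N - k)) *
      (if k = 0 \<or> k = N then 0 else (-1) ^ (k - 1) * fact (N - k) * fact k / fact N * bn N)) =
    - bn N / fact N * ((\<Sum>k\<le>N. (-1) ^ k * (fact k * (r gchoose k)) * (fact (N - k) * (s gchoose (N - k)))) -
      fact N * (s gchoose N) - (-1) ^ N * (fact N * (r gchoose N)))"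
proof -
  define c :: complex where "c = - bn N / fact N"
  define A where "A k = (-1) ^ k * (fact k * (r gchoose k)) * (fact (N - k) * (s gchoose (N - k)))" for k
  have "(\<Sum>k\<le>N. (r gchoose k) * (s gchoose (N - k)) *
      (if k = 0 \<or> k = N then 0 else (-1) ^ (k - 1) * fact (N - k) * fact k / fact N * bn N)) =
      (\<Sum>k\<le>N. if k = 0 \<or> k = N then 0 else c * A k)"
  proof (intro sum.cong refl)
    fix k
    have "(-1) ^ (k - 1) = - ((-1) ^ k :: complex)" if "k \<noteq> 0"
      using that by (cases k) simp_all
    then show "(r gchoose k) * (s gchoose (N - k)) *
        (if k = 0 \<or> k = N then 0 else (-1) ^ (k - 1) * fact (N - k) * fact k / fact N * bn N) =
        (if k = 0 \<or> k = N then 0 else c * A k)"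
      by (simp add: A_def c_def)
  qed
  also have "\<dots> = c * ((\<Sum>k\<le>N. A k) - A 0 - A N)"
    using assms by (simp add: sum_atMost_if_ends sum_distrib_left algebra_simps)
  finally show ?thesis
    by (simp add: A_def c_def)
qed

lemma bernoulli_cyclic_integral_eq_0:
  assumes "N \<ge> 1" and "r + s + t = of_nat N"
  shows "r * ((-1) ^ N * (s gchoose N) * bn N) + s * ((r gchoose N) * bn N) +
    t * ((-1) ^ N * (\<Sum>k\<le>N. (r gchoose k) * (s gchoose (N - k)) *
      (if k = 0 \<or> k = N then 0 else (-1) ^ (k - 1) * fact (N - k) * fact k / fact N * bn N))) = 0"
proof -
  define \<sigma> :: complex where "\<sigma> = (-1) ^ N"
  define c :: complex where "c = - bn N / fact N"
  define A where "A k = (-1) ^ k * (fact k * (r gchoose k)) * (fact (N - k) * (s gchoose (N - k)))" for k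
  have "t = of_nat N - r - s"
    using assms(2) by (simp add: algebra_simps)
  then have tele: "t * (\<Sum>k\<le>N. A k) = - \<sigma> * ((r - of_nat N) * (fact N * (r gchoose N))) -
      (s - of_nat N) * (fact N * (s gchoose N))"
    unfolding A_def \<sigma>_def by (simp only: sum_fact_gbinomial_telescope fact_mult_gbinomial_Suc) simp
  have "t * (\<sigma> * (c * ((\<Sum>k\<le>N. A k) - fact N * (s gchoose N) - \<sigma> * (fact N * (r gchoose N))))) =
      \<sigma> * c * (t * (\<Sum>k\<le>N. A k)) - \<sigma> * c * t * fact N * ((s gchoose N) + \<sigma> * (r gchoose N))"
    by (simp add: algebra_simps)
  also have "\<dots> = \<sigma> * c * fact N * (- \<sigma> * (r - of_nat N) * (r gchoose N) - (s - of_nat N) * (s gchoose N)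
      - t * ((s gchoose N) + \<sigma> * (r gchoose N)))"
    unfolding tele by (simp add: algebra_simps)
  also have "\<dots> = bn N * ((r - of_nat N + t) * (r gchoose N) + \<sigma> * (s - of_nat N + t) * (s gchoose N))"
    by (cases "even N") (simp_all add: \<sigma>_def c_def algebra_simps)
  finally have third: "t * (\<sigma> * (c * ((\<Sum>k\<le>N. A k) - fact N * (s gchoose N) - \<sigma> * (fact N * (r gchoose N))))) =
      bn N * ((r - of_nat N + t) * (r gchoose N) + \<sigma> * (s - of_nat N + t) * (s gchoose N))" .
  have "r * (\<sigma> * (s gchoose N) * bn N) + s * ((r gchoose N) * bn N) +
      t * (\<sigma> * (c * ((\<Sum>k\<le>N. A k) - fact N * (s gchoose N) - \<sigma> * (fact N * (r gchoose N))))) =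
      bn N * (r + s + t - of_nat N) * ((r gchoose N) + \<sigma> * (s gchoose N))"
    unfolding third by (simp add: algebra_simps)
  with assms show ?thesis
    unfolding sum_gbinomial_bernoulli_poly_prod_integral[OF assms(1)]
    by (simp add: A_def c_def flip: \<sigma>_def)
qed

definition bernoulli_cyclic_sum :: "nat \<Rightarrow> complex \<Rightarrow> complex \<Rightarrow> complex \<Rightarrow> complex \<Rightarrow> complex \<Rightarrow> complex" where
  "bernoulli_cyclic_sum N r s t x y =
     r * binom_conv N s t B B x y + s * binom_conv N t r B B y (1 - x - y) +
     t * binom_conv N r s B B (1 - x - y) x"

lemma bernoulli_cyclic_sum_rotate:
  "bernoulli_cyclic_sum N r s t 0 y = bernoulli_cyclic_sum N t r s (1 - y) 0"
  by (simp add: bernoulli_cyclic_sum_def algebra_simps)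

lemma has_field_derivative_bernoulli_cyclic_sum:
  assumes "r + s + t = of_nat (Suc M)"
  shows "((\<lambda>x. bernoulli_cyclic_sum (Suc M) r s t x y) has_field_derivative
    t * bernoulli_cyclic_sum M r s (t - 1) x y) (at x)"
proof -
  let ?z = "1 - x - y"
  have "((\<lambda>x. bernoulli_cyclic_sum (Suc M) r s t x y) has_field_derivative
      r * (1 * t * binom_conv M s (t - 1) B B x y - 0 * s * binom_conv M (s - 1) t B B x y) +
      s * (0 * r * binom_conv M t (r - 1) B B y ?z - (-1) * t * binom_conv M (t - 1) r B B y ?z) +
      t * ((-1) * s * binom_conv M r (s - 1) B B ?z x - 1 * r * binom_conv M (r - 1) s B B ?z x)) (at x)"
    unfolding bernoulli_cyclic_sum_def
    by (intro DERIV_add DERIV_cmult has_field_derivative_binom_conv appell_bernoulli_poly)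
       (auto intro!: derivative_eq_intros)
  moreover have "(-1) * s * binom_conv M r (s - 1) B B ?z x - 1 * r * binom_conv M (r - 1) s B B ?z x =
      (t - 1) * binom_conv M r s B B ?z x"
  proof -
    have "r + s - of_nat M = 1 - t"
      using assms by (simp add: algebra_simps)
    then have "s * binom_conv M r (s - 1) B B ?z x + r * binom_conv M (r - 1) s B B ?z x =
        (1 - t) * binom_conv M r s B B ?z x"
      by (simp only: binom_conv_absorb)
    then show ?thesis
      by (simp add: algebra_simps)
  qed
  ultimately have "((\<lambda>x. bernoulli_cyclic_sum (Suc M) r s t x y) has_field_derivative
      r * (t * binom_conv M s (t - 1) B B x y) + s * (t * binom_conv M (t - 1) r B B y ?z) +
      t * ((t - 1) * binom_conv M r s B B ?z x)) (at x)"
    by simp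
  then show ?thesis
    by (rule DERIV_cong) (simp add: bernoulli_cyclic_sum_def algebra_simps)
qed

lemma has_integral_bernoulli_cyclic_sum:
  assumes "N \<ge> 1" and "r + s + t = of_nat N"
  shows "((\<lambda>u::real. bernoulli_cyclic_sum N r s t (of_real u) 0) has_integral 0) {0..1}"
proof -
  have "((\<lambda>u::real. bernoulli_cyclic_sum N r s t (of_real u) 0) has_integral
      r * ((-1) ^ N * (s gchoose N) * B N 0) + s * ((r gchoose N) * B N 0) +
      t * ((-1) ^ N * (\<Sum>k\<le>N. (r gchoose k) * (s gchoose (N - k)) *
        (if k = 0 \<or> k = N then 0 else (-1) ^ (k - 1) * fact (N - k) * fact k / fact N * bn N)))) {0..1}"
    unfolding bernoulli_cyclic_sum_def diff_zero
    by (intro has_integral_add has_integral_mult_right has_integral_binom_conv_fst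
        has_integral_binom_conv_snd_reflect has_integral_binom_conv_reflect_diag assms(1))
  then show ?thesis
    using bernoulli_cyclic_integral_eq_0[OF assms] by (simp add: bernoulli_poly_at_0)
qed

lemma bernoulli_cyclic_sum_const:
  assumes IH: "\<And>r s t x y. r + s + t = of_nat M \<Longrightarrow> bernoulli_cyclic_sum M r s t x y = 0"
    and "r + s + t = of_nat (Suc M)"
  shows "bernoulli_cyclic_sum (Suc M) r s t x y = bernoulli_cyclic_sum (Suc M) r s t x' y'"
proof -
  have const_fst: "bernoulli_cyclic_sum (Suc M) r' s' t' x y = bernoulli_cyclic_sum (Suc M) r' s' t' 0 y"
    if rst: "r' + s' + t' = of_nat (Suc M)" for r' s' t' x y
  proof -
    have "((\<lambda>x. bernoulli_cyclic_sum (Suc M) r' s' t' x y) has_field_derivative 0) (at w)" for w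
    proof -
      have "r' + s' + (t' - 1) = of_nat M"
        using rst by (simp add: algebra_simps)
      then have "bernoulli_cyclic_sum M r' s' (t' - 1) w y = 0"
        by (rule IH)
      with has_field_derivative_bernoulli_cyclic_sum[OF rst, of y w] show ?thesis
        by simp
    qed
    then show ?thesis by (rule DERIV_zero_imp_eq)
  qed
  have "t + r + s = of_nat (Suc M)"
    using assms(2) by (simp add: algebra_simps)
  then have "bernoulli_cyclic_sum (Suc M) r s t x y = bernoulli_cyclic_sum (Suc M) t r s 0 0" for x y
    using const_fst[OF assms(2), of x y] const_fst[of t r s "1 - y" 0] bernoulli_cyclic_sum_rotate
    by simp
  then show ?thesis by simp
qed

theorem bernoulli_cyclic_sum_eq_0:
  "r + s + t = of_nat N \<Longrightarrow> bernoulli_cyclic_sum N r s t x y = 0"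
proof (induction N arbitrary: r s t x y)
  case 0
  then show ?case by (simp add: bernoulli_cyclic_sum_def flip: distrib_right)
next
  case (Suc M)
  have "((\<lambda>u::real. bernoulli_cyclic_sum (Suc M) r s t (of_real u) 0) has_integral 0) {0..1}"
    by (rule has_integral_bernoulli_cyclic_sum[OF _ Suc.prems]) simp
  moreover have "bernoulli_cyclic_sum (Suc M) r s t (of_real u) 0 = bernoulli_cyclic_sum (Suc M) r s t x y" for u
    by (rule bernoulli_cyclic_sum_const[OF Suc.IH Suc.prems])
  ultimately have "((\<lambda>u::real. bernoulli_cyclic_sum (Suc M) r s t x y) has_integral 0) {0..1}"
    by simp
  moreover have "((\<lambda>u::real. bernoulli_cyclic_sum (Suc M) r s t x y) has_integral
      bernoulli_cyclic_sum (Suc M) r s t x y) {0..1}"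
    using has_integral_const_real[of "bernoulli_cyclic_sum (Suc M) r s t x y" 0 1] by simp
  ultimately show ?case
    by (metis has_integral_unique)
qed

section \<open>The cyclic identity for Euler polynomials\<close>

definition euler_cyclic_sum :: "nat \<Rightarrow> complex \<Rightarrow> complex \<Rightarrow> complex \<Rightarrow> complex \<Rightarrow> complex \<Rightarrow> complex" where
  "euler_cyclic_sum M r s t x y =
     r / 2 * binom_conv M s t E E x y + binom_conv (Suc M) t r B E y (1 - x - y) -
     binom_conv (Suc M) r s E B (1 - x - y) x"

lemma has_field_derivative_euler_cyclic_sum_fst:
  assumes "r + s + t = of_nat (Suc K)"
  shows "((\<lambda>x. euler_cyclic_sum (Suc K) r s t x y) has_field_derivative
    t * euler_cyclic_sum K r s (t - 1) x y) (at x)"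
proof -
  let ?z = "1 - x - y"
  have deriv: "((\<lambda>x. euler_cyclic_sum (Suc K) r s t x y) has_field_derivative
      r / 2 * (1 * t * binom_conv K s (t - 1) E E x y - 0 * s * binom_conv K (s - 1) t E E x y) +
      (0 * r * binom_conv (Suc K) t (r - 1) B E y ?z - (-1) * t * binom_conv (Suc K) (t - 1) r B E y ?z) -
      ((-1) * s * binom_conv (Suc K) r (s - 1) E B ?z x - 1 * r * binom_conv (Suc K) (r - 1) s E B ?z x)) (at x)"
    unfolding euler_cyclic_sum_def
    by (intro DERIV_add DERIV_diff DERIV_cmult has_field_derivative_binom_conv
        appell_bernoulli_poly appell_euler_poly) (auto intro!: derivative_eq_intros)
  have "r + s - of_nat (Suc K) = - t"
    using assms by (simp add: algebra_simps)
  then have absorb: "s * binom_conv (Suc K) r (s - 1) E B ?z x + r * binom_conv (Suc K) (r - 1) s E B ?z x =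
      - t * binom_conv (Suc K) r s E B ?z x"
    by (simp only: binom_conv_absorb)
  have "r / 2 * (1 * t * binom_conv K s (t - 1) E E x y - 0 * s * binom_conv K (s - 1) t E E x y) +
      (0 * r * binom_conv (Suc K) t (r - 1) B E y ?z - (-1) * t * binom_conv (Suc K) (t - 1) r B E y ?z) -
      ((-1) * s * binom_conv (Suc K) r (s - 1) E B ?z x - 1 * r * binom_conv (Suc K) (r - 1) s E B ?z x) =
      r / 2 * (t * binom_conv K s (t - 1) E E x y) + t * binom_conv (Suc K) (t - 1) r B E y ?z +
      (s * binom_conv (Suc K) r (s - 1) E B ?z x + r * binom_conv (Suc K) (r - 1) s E B ?z x)"
    by (simp add: algebra_simps)
  also have "\<dots> = t * euler_cyclic_sum K r s (t - 1) x y"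
    unfolding absorb by (simp add: euler_cyclic_sum_def algebra_simps)
  finally show ?thesis
    by (rule DERIV_cong[OF deriv])
qed

lemma has_field_derivative_euler_cyclic_sum_snd:
  assumes "r + s + t = of_nat (Suc K)"
  shows "((\<lambda>y. euler_cyclic_sum (Suc K) r s t x y) has_field_derivative
    - s * euler_cyclic_sum K r (s - 1) t x y) (at y)"
proof -
  let ?z = "1 - x - y"
  have deriv: "((\<lambda>y. euler_cyclic_sum (Suc K) r s t x y) has_field_derivative
      r / 2 * (0 * t * binom_conv K s (t - 1) E E x y - 1 * s * binom_conv K (s - 1) t E E x y) +
      (1 * r * binom_conv (Suc K) t (r - 1) B E y ?z - (-1) * t * binom_conv (Suc K) (t - 1) r B E y ?z) -
      ((-1) * s * binom_conv (Suc K) r (s - 1) E B ?z x - 0 * r * binom_conv (Suc K) (r - 1) s E B ?z x)) (at y)"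
    unfolding euler_cyclic_sum_def
    by (intro DERIV_add DERIV_diff DERIV_cmult has_field_derivative_binom_conv
        appell_bernoulli_poly appell_euler_poly) (auto intro!: derivative_eq_intros)
  have "t + r - of_nat (Suc K) = - s"
    using assms by (simp add: algebra_simps)
  then have absorb: "r * binom_conv (Suc K) t (r - 1) B E y ?z + t * binom_conv (Suc K) (t - 1) r B E y ?z =
      - s * binom_conv (Suc K) t r B E y ?z"
    by (simp only: binom_conv_absorb)
  have "r / 2 * (0 * t * binom_conv K s (t - 1) E E x y - 1 * s * binom_conv K (s - 1) t E E x y) +
      (1 * r * binom_conv (Suc K) t (r - 1) B E y ?z - (-1) * t * binom_conv (Suc K) (t - 1) r B E y ?z) -
      ((-1) * s * binom_conv (Suc K) r (s - 1) E B ?z x - 0 * r * binom_conv (Suc K) (r - 1) s E B ?z x) =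
      - (r / 2 * (s * binom_conv K (s - 1) t E E x y)) +
      (r * binom_conv (Suc K) t (r - 1) B E y ?z + t * binom_conv (Suc K) (t - 1) r B E y ?z) +
      s * binom_conv (Suc K) r (s - 1) E B ?z x"
    by (simp add: algebra_simps)
  also have "\<dots> = - s * euler_cyclic_sum K r (s - 1) t x y"
    unfolding absorb by (simp add: euler_cyclic_sum_def algebra_simps)
  finally show ?thesis
    by (rule DERIV_cong[OF deriv])
qed

lemma euler_cyclic_sum_0:
  assumes "r + s + t = 0"
  shows "euler_cyclic_sum 0 r s t x y = 0"
proof -
  have "euler_cyclic_sum 0 r s t x y = r / 2 + r * (y - 1/2) + r * (x - 1/2) - (t + s) * (1/2 - x - y)"
    by (simp add: euler_cyclic_sum_def binom_conv_def bernoulli_poly_1 euler_poly_1 algebra_simps)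
  also have "t + s = - r"
    using assms by (simp add: algebra_simps eq_neg_iff_add_eq_0)
  finally show ?thesis
    by (simp add: algebra_simps)
qed

lemma binom_conv_euler_fst_at_1_add_at_0:
  "binom_conv N s t E Q 1 y + binom_conv N s t E Q 0 y = 2 * (-1) ^ N * (s gchoose N) * Q N y"
proof -
  have "binom_conv N s t E Q 1 y + binom_conv N s t E Q 0 y =
      (\<Sum>k\<le>N. (-1) ^ k * (s gchoose k) * (t gchoose (N - k)) * (E (N - k) 1 + E (N - k) 0) * Q k y)"
    by (simp add: binom_conv_def sum.distrib [symmetric] algebra_simps)
  also have "\<dots> = 2 * (-1) ^ N * (s gchoose N) * Q N y"
    by (subst sum_atMost_eq_single[of N]) (auto simp: euler_poly_at_1_add_at_0)
  finally show ?thesis .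
qed

lemma binom_conv_euler_snd_at_1_add_at_0:
  "binom_conv N s t P E x 1 + binom_conv N s t P E x 0 = 2 * (t gchoose N) * P N x"
proof -
  have "binom_conv N s t P E x 1 + binom_conv N s t P E x 0 =
      (\<Sum>k\<le>N. (-1) ^ k * (s gchoose k) * (t gchoose (N - k)) * P (N - k) x * (E k 1 + E k 0))"
    by (simp add: binom_conv_def sum.distrib [symmetric] algebra_simps)
  also have "\<dots> = 2 * (t gchoose N) * P N x"
    by (subst sum_atMost_eq_single[of 0]) (auto simp: euler_poly_at_1_add_at_0)
  finally show ?thesis .
qed

lemma binom_conv_euler_bernoulli_ends:
  "binom_conv (Suc M) r s E B 1 0 + binom_conv (Suc M) r s E B 0 1 =
    2 * (-1) ^ Suc M * (r gchoose Suc M) * bn (Suc M) - r * (s gchoose M) * E M 0"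
proof -
  have "binom_conv (Suc M) r s E B 1 0 + binom_conv (Suc M) r s E B 0 1 =
      binom_conv (Suc M) r s E B 1 0 + binom_conv (Suc M) r s E B 0 0 +
      (\<Sum>k\<le>Suc M. (-1) ^ k * (r gchoose k) * (s gchoose (Suc M - k)) * E (Suc M - k) 0 * (if k = 1 then 1 else 0))"
    by (simp add: binom_conv_def bernoulli_poly_at_1 bernoulli_poly_at_0 sum.distrib [symmetric] algebra_simps)
  also have "(\<Sum>k\<le>Suc M. (-1) ^ k * (r gchoose k) * (s gchoose (Suc M - k)) * E (Suc M - k) 0 * (if k = 1 then 1 else 0)) =
      - r * (s gchoose M) * E M 0"
    by (subst sum_atMost_eq_single[of 1]) auto
  finally show ?thesis
    by (simp add: binom_conv_euler_fst_at_1_add_at_0 bernoulli_poly_at_0)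
qed

lemma euler_cyclic_sum_ends:
  assumes "M \<ge> 1"
  shows "euler_cyclic_sum M r s t 1 0 + euler_cyclic_sum M r s t 0 0 = 0"
proof -
  have "euler_cyclic_sum M r s t 1 0 + euler_cyclic_sum M r s t 0 0 =
      r / 2 * (binom_conv M s t E E 1 0 + binom_conv M s t E E 0 0) +
      (binom_conv (Suc M) t r B E 0 1 + binom_conv (Suc M) t r B E 0 0) -
      (binom_conv (Suc M) r s E B 1 0 + binom_conv (Suc M) r s E B 0 1)"
    by (simp add: euler_cyclic_sum_def algebra_simps)
  also have "\<dots> = (1 + (-1) ^ M) * (r * (s gchoose M) * E M 0 + 2 * (r gchoose Suc M) * bn (Suc M))"
    by (simp add: binom_conv_euler_fst_at_1_add_at_0 binom_conv_euler_snd_at_1_add_at_0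
        binom_conv_euler_bernoulli_ends bernoulli_poly_at_0 algebra_simps)
  also have "\<dots> = 0"
  proof (cases "even M")
    case True
    with assms have "E M 0 = 0" and "bernoulli_num (Suc M) = 0"
      by (simp_all add: euler_poly_even_at_0 bernoulli_num_odd_eq_0)
    then show ?thesis by simp
  qed simp
  finally show ?thesis .
qed

theorem euler_cyclic_sum_eq_0:
  "r + s + t = of_nat M \<Longrightarrow> euler_cyclic_sum M r s t x y = 0"
proof (induction M arbitrary: r s t x y)
  case 0
  then show ?case by (simp add: euler_cyclic_sum_0)
next
  case (Suc K)
  have const_x: "euler_cyclic_sum (Suc K) r s t x' y' = euler_cyclic_sum (Suc K) r s t 0 y'" for x' y'
  proof -
    have "r + s + (t - 1) = of_nat K"
      using Suc.prems by (simp add: algebra_simps)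
    then have "((\<lambda>x. euler_cyclic_sum (Suc K) r s t x y') has_field_derivative 0) (at w)" for w
      using has_field_derivative_euler_cyclic_sum_fst[OF Suc.prems, of y' w] Suc.IH by simp
    then show ?thesis by (rule DERIV_zero_imp_eq)
  qed
  have const_y: "euler_cyclic_sum (Suc K) r s t 0 y' = euler_cyclic_sum (Suc K) r s t 0 0" for y'
  proof -
    have "r + (s - 1) + t = of_nat K"
      using Suc.prems by (simp add: algebra_simps)
    then have "((\<lambda>y. euler_cyclic_sum (Suc K) r s t 0 y) has_field_derivative 0) (at w)" for w
      using has_field_derivative_euler_cyclic_sum_snd[OF Suc.prems, of 0 w] Suc.IH by simp
    then show ?thesis by (rule DERIV_zero_imp_eq)
  qed
  have "euler_cyclic_sum (Suc K) r s t 1 0 + euler_cyclic_sum (Suc K) r s t 0 0 = 0"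
    by (rule euler_cyclic_sum_ends) simp
  then have "euler_cyclic_sum (Suc K) r s t 0 0 = 0"
    using const_x[of 1 0] by simp
  then show ?case
    using const_x const_y by simp
qed

section \<open>Specialisation to the corollary\<close>

lemma binom_conv_euler_of_nat_reflect:
  assumes "l < n"
  shows "binom_conv (n + l - 1) (of_nat n) (of_nat n) E E (1 - x) y = - ((-1) ^ (n + l)) *
    (\<Sum>k = (if l = 0 then 1 else 0)..n. of_nat (n choose k) * of_nat (n choose (k + l - 1))
      * E (k + l - 1) x * E (n - k) y)"
proof -
  obtain m where "n + l = Suc m"
    using assms by (cases "n + l") auto
  then have sign: "(-1) ^ (n + l - 1) = - ((-1) ^ (n + l) :: complex)"
    by simp
  have lower: "n - (n + l - 1) = (if l = 0 then 1 else 0)"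
    using assms by auto
  have reindex: "(\<Sum>k = n - (n + l - 1)..n. of_nat (n choose k) * of_nat (n choose (n + l - 1 + k - n)) *
      E (n + l - 1 + k - n) x * E (n - k) y) =
    (\<Sum>k = (if l = 0 then 1 else 0)..n. of_nat (n choose k) * of_nat (n choose (k + l - 1))
      * E (k + l - 1) x * E (n - k) y)"
    unfolding lower
  proof (intro sum.cong refl)
    fix k
    assume "k \<in> {(if l = 0 then 1 else 0)..n}"
    then have "n + l - 1 + k - n = k + l - 1"
      by (auto split: if_splits)
    then show "of_nat (n choose k) * of_nat (n choose (n + l - 1 + k - n)) * E (n + l - 1 + k - n) x * E (n - k) y =
        of_nat (n choose k) * of_nat (n choose (k + l - 1)) * E (k + l - 1) x * E (n - k) y"
      by (simp only:)
  qed
  show ?thesis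
    unfolding binom_conv_of_nat_reflect_fst[where P = E, OF euler_poly_reflect] sign reindex by (rule refl)
qed

lemma euler_poly_convolution:
  assumes "l < n"
  shows "of_nat (n - l + 1) / 2 *
      (\<Sum>k = (if l = 0 then 1 else 0)..n. of_nat (n choose k) * of_nat (n choose (k + l - 1))
          * E (k + l - 1) x * E (n - k) y)
    = (\<Sum>k = 0..n. of_nat (n choose k) * of_nat ((k + n) choose (k + l))
          * ((-1) ^ (n - k) * B (k + l) x - B (k + l) y) * E (n - k) (x - y))"
proof -
  define S where "S = (\<Sum>k = (if l = 0 then 1 else 0)..n. of_nat (n choose k) * of_nat (n choose (k + l - 1))
    * E (k + l - 1) x * E (n - k) y)"
  define Rx where "Rx = (\<Sum>k = 0..n. of_nat (n choose k) * of_nat ((k + n) choose (k + l))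
    * ((-1) ^ (n - k) * B (k + l) x) * E (n - k) (x - y))"
  define Ry where "Ry = (\<Sum>k = 0..n. of_nat (n choose k) * of_nat ((k + n) choose (k + l))
    * B (k + l) y * E (n - k) (x - y))"
  define r :: complex where "r = of_nat l - of_nat n - 1"
  define \<sigma> :: complex where "\<sigma> = (-1) ^ (n + l)"
  have N: "Suc (n + l - 1) = n + l"
    using assms by auto
  have conv_E: "binom_conv (n + l - 1) (of_nat n) (of_nat n) E E (1 - x) y = - \<sigma> * S"
    unfolding S_def \<sigma>_def by (rule binom_conv_euler_of_nat_reflect[OF assms])
  have conv_BE: "binom_conv (n + l) (of_nat n) r B E y (x - y) = \<sigma> * Ry"
    using binom_conv_of_nat_neg[OF assms, of 1 B E y "x - y"] by (simp add: r_def Ry_def \<sigma>_def)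
  have conv_EB: "binom_conv (n + l) r (of_nat n) E B (x - y) (1 - x) = \<sigma> * Rx"
    using binom_conv_of_nat_neg_reflect_snd[where Q = B, OF assms bernoulli_poly_reflect, of 1 E "x - y" x]
    by (simp add: r_def Rx_def \<sigma>_def)
  have xy: "1 - (1 - x) - y = x - y"
    by simp
  have "r + of_nat n + of_nat n = of_nat (n + l - 1)"
    using assms by (simp add: r_def of_nat_diff)
  then have "euler_cyclic_sum (n + l - 1) r (of_nat n) (of_nat n) (1 - x) y = 0"
    by (rule euler_cyclic_sum_eq_0)
  then have "\<sigma> * (- r / 2 * S + Ry - Rx) = 0"
    unfolding euler_cyclic_sum_def N(1) xy conv_E conv_BE conv_EB by (simp add: algebra_simps)
  then have "- r / 2 * S + Ry - Rx = 0"
    by (simp add: \<sigma>_def)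
  moreover have "- r = of_nat (n - l + 1)"
    using assms by (simp add: r_def of_nat_diff)
  ultimately have "of_nat (n - l + 1) / 2 * S = Rx - Ry"
    by (simp add: algebra_simps)
  moreover have "(\<Sum>k = 0..n. of_nat (n choose k) * of_nat ((k + n) choose (k + l))
      * ((-1) ^ (n - k) * B (k + l) x - B (k + l) y) * E (n - k) (x - y)) = Rx - Ry"
    unfolding Rx_def Ry_def by (simp add: sum_subtractf [symmetric] algebra_simps)
  ultimately show ?thesis
    unfolding S_def by (simp only:)
qed

lemma binom_conv_bernoulli_of_nat_reflect:
  assumes "l < n"
  shows "binom_conv (n + l) (of_nat n) (of_nat n) B B (1 - x) y = (-1) ^ (n + l) *
    (\<Sum>k = 0..n - l. of_nat (n choose k) * of_nat (n choose (k + l)) * B (k + l) x * B (n - k) y)"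
proof -
  have "(\<Sum>k = n - (n + l)..n. of_nat (n choose k) * of_nat (n choose (n + l + k - n)) *
      B (n + l + k - n) x * B (n - k) y) =
    (\<Sum>k = 0..n - l. of_nat (n choose k) * of_nat (n choose (k + l)) * B (k + l) x * B (n - k) y)"
    by (rule sum.mono_neutral_cong_right) (use assms in \<open>auto simp: add.commute\<close>)
  then show ?thesis
    by (simp add: binom_conv_of_nat_reflect_fst[where P = B, OF bernoulli_poly_reflect])
qed

lemma bernoulli_poly_convolution:
  assumes "l < n"
  shows "of_nat (n - l) / of_nat n *
      (\<Sum>k = 0..n - l. of_nat (n choose k) * of_nat (n choose (k + l)) * B (k + l) x * B (n - k) y)
    = (\<Sum>k = 0..n. of_nat (n choose k) * of_nat ((k + n - 1) choose (k + l))
          * ((-1) ^ (n - k) * B (k + l) x + B (k + l) y) * B (n - k) (x - y))"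
proof -
  define S where "S = (\<Sum>k = 0..n - l. of_nat (n choose k) * of_nat (n choose (k + l)) * B (k + l) x * B (n - k) y)"
  define Rx where "Rx = (\<Sum>k = 0..n. of_nat (n choose k) * of_nat ((k + n - 1) choose (k + l))
    * ((-1) ^ (n - k) * B (k + l) x) * B (n - k) (x - y))"
  define Ry where "Ry = (\<Sum>k = 0..n. of_nat (n choose k) * of_nat ((k + n - 1) choose (k + l))
    * B (k + l) y * B (n - k) (x - y))"
  define r :: complex where "r = of_nat l - of_nat n"
  define \<sigma> :: complex where "\<sigma> = (-1) ^ (n + l)"
  have conv_BB: "binom_conv (n + l) (of_nat n) (of_nat n) B B (1 - x) y = \<sigma> * S"
    unfolding S_def \<sigma>_def by (rule binom_conv_bernoulli_of_nat_reflect[OF assms])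
  have conv_BB_neg: "binom_conv (n + l) (of_nat n) r B B y (x - y) = \<sigma> * Ry"
    using binom_conv_of_nat_neg[OF assms, of 0 B B y "x - y"] by (simp add: r_def Ry_def \<sigma>_def)
  have conv_BB_neg_reflect: "binom_conv (n + l) r (of_nat n) B B (x - y) (1 - x) = \<sigma> * Rx"
    using binom_conv_of_nat_neg_reflect_snd[where Q = B, OF assms bernoulli_poly_reflect, of 0 B "x - y" x]
    by (simp add: r_def Rx_def \<sigma>_def)
  have xy: "1 - (1 - x) - y = x - y"
    by simp
  have "r + of_nat n + of_nat n = of_nat (n + l)"
    by (simp add: r_def)
  then have "bernoulli_cyclic_sum (n + l) r (of_nat n) (of_nat n) (1 - x) y = 0"
    by (rule bernoulli_cyclic_sum_eq_0)
  then have "\<sigma> * (r * S + of_nat n * (Rx + Ry)) = 0"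
    unfolding bernoulli_cyclic_sum_def xy conv_BB conv_BB_neg conv_BB_neg_reflect by (simp add: algebra_simps)
  then have "r * S + of_nat n * (Rx + Ry) = 0"
    by (simp add: \<sigma>_def)
  then have "(of_nat n - of_nat l) * S = of_nat n * (Rx + Ry)"
    by (simp add: r_def algebra_simps)
  then have "of_nat (n - l) / of_nat n * S = Rx + Ry"
    using assms by (simp add: of_nat_diff field_simps)
  moreover have "(\<Sum>k = 0..n. of_nat (n choose k) * of_nat ((k + n - 1) choose (k + l))
      * ((-1) ^ (n - k) * B (k + l) x + B (k + l) y) * B (n - k) (x - y)) = Rx + Ry"
    unfolding Rx_def Ry_def by (simp add: sum.distrib [symmetric] algebra_simps)
  ultimately show ?thesis
    unfolding S_def by (simp only:)
qed

lemma euler_poly_at_0_alternating: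
  assumes "k < n"
  shows "of_nat (Suc n) * of_nat (n choose k) * ((-1) ^ (n - k) - 1) * E (n - k) 0 =
    4 * of_nat (Suc n choose k) * (2 ^ (n - k + 1) - 1) * bn (n - k + 1)"
proof -
  define m where "m = n - k"
  have m: "m \<ge> 1" "Suc n - k = Suc m"
    using assms by (auto simp: m_def)
  have "Suc m * (Suc n choose k) = Suc n * (n choose k)"
    using binomial_absorb_comp[of "Suc n" k] m(2) by simp
  then have "of_nat (Suc n) * of_nat (n choose k) = of_nat (Suc n choose k) * (of_nat (Suc m) :: complex)"
    by (metis mult.commute of_nat_mult)
  then have "of_nat (Suc n) * of_nat (n choose k) * ((-1) ^ m - 1) * E m 0 =
      of_nat (Suc n choose k) * ((-1) ^ m - 1) * (of_nat (Suc m) * E m 0)"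
    by (simp add: algebra_simps)
  also have "\<dots> = 4 * of_nat (Suc n choose k) * (2 ^ Suc m - 1) * bn (Suc m) * ((1 - (-1) ^ m) / 2)"
    unfolding euler_poly_at_0 by (simp add: field_simps)
  also have "\<dots> = 4 * of_nat (Suc n choose k) * (2 ^ Suc m - 1) * bn (Suc m)"
    using m(1) by (cases "even m") (simp_all add: bernoulli_num_odd_eq_0)
  finally show ?thesis
    by (simp add: m_def)
qed

lemma euler_poly_convolution_diagonal:
  assumes "l < n"
  shows "of_nat ((n + 1) * (n + 1 - l)) / 8 *
      (\<Sum>k = (if l = 0 then 1 else 0)..n. of_nat (n choose k) * of_nat (n choose (k + l - 1))
          * E (k + l - 1) x * E (n - k) x)
    = (\<Sum>k = 0..n - 1. of_nat ((n + 1) choose k) * of_nat ((k + n) choose (k + l))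
          * B (k + l) x * (2 ^ (n - k + 1) - 1) * bn (n - k + 1))"
proof -
  define S where "S = (\<Sum>k = (if l = 0 then 1 else 0)..n. of_nat (n choose k) * of_nat (n choose (k + l - 1))
    * E (k + l - 1) x * E (n - k) x)"
  define T where "T k = of_nat (n choose k) * of_nat ((k + n) choose (k + l)) *
    ((-1) ^ (n - k) * B (k + l) x - B (k + l) x) * E (n - k) 0" for k
  have "of_nat (n - l + 1) / 2 * S = (\<Sum>k = 0..n. T k)"
    using euler_poly_convolution[OF assms, of x x] by (simp add: S_def T_def)
  also have "\<dots> = (\<Sum>k = 0..n - 1. T k)"
    using assms by (cases n) (simp_all add: sum.atLeast0_atMost_Suc T_def)
  finally have conv: "of_nat (n - l + 1) / 2 * S = (\<Sum>k = 0..n - 1. T k)" .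
  have "(n + 1) * (n + 1 - l) = Suc n * (n - l + 1)"
    using assms by (simp add: Suc_diff_le less_imp_le_nat)
  then have "of_nat ((n + 1) * (n + 1 - l)) / 8 * S = of_nat (Suc n) / 4 * (of_nat (n - l + 1) / 2 * S)"
    by (simp only: of_nat_mult) (simp add: field_simps)
  also have "\<dots> = (\<Sum>k = 0..n - 1. of_nat (Suc n) / 4 * T k)"
    unfolding conv by (simp add: sum_distrib_left)
  also have "\<dots> = (\<Sum>k = 0..n - 1. of_nat ((n + 1) choose k) * of_nat ((k + n) choose (k + l))
      * B (k + l) x * (2 ^ (n - k + 1) - 1) * bn (n - k + 1))"
  proof (intro sum.cong refl)
    fix k
    assume "k \<in> {0..n - 1}"
    then have "k < n"
      using assms by auto
    let ?c = "of_nat ((k + n) choose (k + l)) * B (k + l) x / 4"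
    have "of_nat (Suc n) / 4 * T k = ?c * (of_nat (Suc n) * of_nat (n choose k) * ((-1) ^ (n - k) - 1) * E (n - k) 0)"
      unfolding T_def by (simp add: field_simps)
    also have "\<dots> = ?c * (4 * of_nat (Suc n choose k) * (2 ^ (n - k + 1) - 1) * bn (n - k + 1))"
      unfolding euler_poly_at_0_alternating[OF \<open>k < n\<close>] ..
    finally show "of_nat (Suc n) / 4 * T k =
        of_nat ((n + 1) choose k) * of_nat ((k + n) choose (k + l)) * B (k + l) x * (2 ^ (n - k + 1) - 1) * bn (n - k + 1)"
      by simp
  qed
  finally show ?thesis
    unfolding S_def .
qed

lemma bernoulli_poly_convolution_diagonal:
  assumes "l < n"
  shows "(\<Sum>k = 0..n - l. of_nat (n choose k) * of_nat (n choose (k + l)) * B (k + l) x * B (n - k) x)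
    = of_nat (2 * n) / of_nat (n - l) *
      (\<Sum>k \<in> {0..n} - {n - 1}. of_nat (n choose k) * of_nat ((k + n - 1) choose (k + l))
          * B (k + l) x * bn (n - k))"
proof -
  define S where "S = (\<Sum>k = 0..n - l. of_nat (n choose k) * of_nat (n choose (k + l)) * B (k + l) x * B (n - k) x)"
  define U where "U = (\<Sum>k \<in> {0..n} - {n - 1}. of_nat (n choose k) * of_nat ((k + n - 1) choose (k + l))
    * B (k + l) x * bn (n - k))"
  define T where "T k = of_nat (n choose k) * of_nat ((k + n - 1) choose (k + l)) *
    ((-1) ^ (n - k) * B (k + l) x + B (k + l) x) * B (n - k) 0" for k
  have "of_nat (n - l) / of_nat n * S = (\<Sum>k = 0..n. T k)"
    using bernoulli_poly_convolution[OF assms, of x x] by (simp add: S_def T_def)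
  also have "\<dots> = T (n - 1) + (\<Sum>k \<in> {0..n} - {n - 1}. T k)"
    by (rule sum.remove) auto
  also have "T (n - 1) = 0"
    using assms by (simp add: T_def Suc_diff_Suc [symmetric])
  also have "(\<Sum>k \<in> {0..n} - {n - 1}. T k) = 2 * U"
    unfolding U_def sum_distrib_left
  proof (intro sum.cong refl)
    fix k
    assume "k \<in> {0..n} - {n - 1}"
    then have "n - k \<noteq> 1"
      by auto
    then show "T k = 2 * (of_nat (n choose k) * of_nat ((k + n - 1) choose (k + l)) * B (k + l) x * bn (n - k))"
      by (cases "even (n - k)") (simp_all add: T_def bernoulli_poly_at_0 bernoulli_num_odd_eq_0 algebra_simps)
  qed
  finally have "of_nat (n - l) / of_nat n * S = 2 * U"
    by simp
  then show ?thesis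
    using assms unfolding S_def [symmetric] U_def [symmetric] by (simp add: field_simps)
qed

theorem corollary1p2:
  fixes n l :: nat and x y :: complex
  assumes "n > l"
  shows
   "(of_nat (n - l + 1) / 2 *
      (\<Sum>k = (if l = 0 then 1 else 0)..n. of_nat (n choose k) * of_nat (n choose (k + l - 1))
          * euler_poly (k + l - 1) x * euler_poly (n - k) y)
    = (\<Sum>k = 0..n. of_nat (n choose k) * of_nat ((k + n) choose (k + l))
          * ((-1) ^ (n - k) * bernoulli_poly (k + l) x - bernoulli_poly (k + l) y)
          * euler_poly (n - k) (x - y))) \<and>
    (of_nat (n - l) / of_nat n *
      (\<Sum>k = 0..n - l. of_nat (n choose k) * of_nat (n choose (k + l))
          * bernoulli_poly (k + l) x * bernoulli_poly (n - k) y)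
    = (\<Sum>k = 0..n. of_nat (n choose k) * of_nat ((k + n - 1) choose (k + l))
          * ((-1) ^ (n - k) * bernoulli_poly (k + l) x + bernoulli_poly (k + l) y)
          * bernoulli_poly (n - k) (x - y))) \<and>
    (of_nat ((n + 1) * (n + 1 - l)) / 8 *
      (\<Sum>k = (if l = 0 then 1 else 0)..n. of_nat (n choose k) * of_nat (n choose (k + l - 1))
          * euler_poly (k + l - 1) x * euler_poly (n - k) x)
    = (\<Sum>k = 0..n - 1. of_nat ((n + 1) choose k) * of_nat ((k + n) choose (k + l))
          * bernoulli_poly (k + l) x * (2 ^ (n - k + 1) - 1) * of_rat (bernoulli_num (n - k + 1)))) \<and>
    ((\<Sum>k = 0..n - l. of_nat (n choose k) * of_nat (n choose (k + l))
          * bernoulli_poly (k + l) x * bernoulli_poly (n - k) x)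
    = of_nat (2 * n) / of_nat (n - l) *
      (\<Sum>k \<in> {0..n} - {n - 1}. of_nat (n choose k) * of_nat ((k + n - 1) choose (k + l))
          * bernoulli_poly (k + l) x * of_rat (bernoulli_num (n - k))))"
  using euler_poly_convolution[OF assms] bernoulli_poly_convolution[OF assms]
    euler_poly_convolution_diagonal[OF assms] bernoulli_poly_convolution_diagonal[OF assms]
  by blast

end
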